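(* For every integer $k\ge2$, the price of anarchy of the weighted atomic two-stage facility location game with $k$ facility agents, measured by the weighted participation rate (which equals the utilitarian social welfare of the facility agents, i.e. the sum of their loads), is exactly $2$. That is, for every instance $(H,U,k)$ with $k$ facility agents, every subgame perfect equilibrium $(\mathbf{s},\sigma)$ and every facility placement profile $\mathbf{s}^*$ we have $w(\mathbf{s}^* )\le 2\,w(\mathbf{s})$, and there exist instances with $k$ facility agents having a subgame perfect equilibrium $(\mathbf{s},\sigma)$ and a facility placement profile $\mathbf{s}^*$ with $w(\mathbf{s}^* )=2\,w(\mathbf{s})>0$.
   Context: Atomic two-stage facility location game. An instance is a triple $(H,U,k)$: $H=(V,E,w)$ is a finite directed graph with vertex weights $w:V\to\mathbb{Q}_{>0}$; $F$ is a set of $k$ facility agents; $U:F\to 2^V$ assigns to each facility agent $f$ a set $U(f)\subseteq V$ of feasible locations. The vertices are simultaneously the clients and the possible locations; $w(X)=\sum_{v\in X}w(v)$. A facility placement profile (FPP) is a vector $\mathbf{s}=(s_f)_{f\in F}$ with $s_f\in U(f)$ (several facilities may choose the same vertex); $S$ denotes the set of all FPPs. For a client $v$ let $N(v)=\{v\}\cup\{u:(v,u)\in E\}$ and $N_{\mathbf{s}}(v)=\{f\in F: s_f\in N(v)\}$. A client profile for $\mathbf{s}$ is $\sigma(\mathbf{s})$, assigning to each client $v$ numbers $\sigma(\mathbf{s})_{v,f}\in[0,1]$ ($f\in F$) with $\sigma(\mathbf{s})_{v,f}=0$ for $f\notin N_{\mathbf{s}}(v)$ and $\sum_{f\in N_{\mathbf{s}}(v)}\sigma(\mathbf{s})_{v,f}=1$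 whenever $N_{\mathbf{s}}(v)\neq\varnothing$. A full client profile $\sigma$ specifies a client profile $\sigma(\mathbf{s}')$ for every $\mathbf{s}'\in S$. The load of facility $f$ is $\ell_f(\mathbf{s},\sigma)=\sum_{v\in V}\sigma(\mathbf{s})_{v,f}w(v)$. The cost of client $v$ is $L_v(\mathbf{s},\sigma)=w(v)+\sum_{f\in N_{\mathbf{s}}(v)}\sigma(\mathbf{s})_{v,f}\,\ell_{-v,f}(\mathbf{s},\sigma)$ where $\ell_{-v,f}(\mathbf{s},\sigma)=\sum_{u\neq v}\sigma(\mathbf{s})_{u,f}w(u)$. $\sigma(\mathbf{s})$ is a client equilibrium if no client $v$ can strictly decrease $L_v$ by unilaterally changing her own distribution to another feasible one; $\sigma$ is a full client equilibrium if $\sigma(\mathbf{s}')$ is a client equilibrium for every $\mathbf{s}'\in S$. A pair $(\mathbf{s},\sigma)$ is a subgame perfect equilibrium (SPE) if $\sigma$ is a full client equilibrium and there is no facility $f$ and location $s'_f\in U(f)$ with $\ell_f((s'_f,\mathbf{s}_{-f}),\sigma)>\ell_f(\mathbf{s},\sigma)$. The weighted participation rate of an FPP $\mathbf{s}$ is $w(\mathbf{s})=\sum_{v:\,N_{\mathbf{s}}(v)\neq\varnothing}w(v)$. The price of anarchy is the maximum, over instances admitting an SPE with positive participation rate, of $\max_{\mathbf{s}^*\in S}w(\mathbf{s}^* )$ divided by the minimum of $w(\mathbf{s})$ over SPE $(\mathbf{s},\sigma)$ of that instance. *)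

theory Defs
  imports Complex_Main "HOL-Library.FuncSet"
begin

text \<open>A client profile for an FPP is p :: 'v \<Rightarrow> 'f \<Rightarrow> real (p v f = sigma(s)_{v,f});
 a full client profile is sigma :: ('f \<Rightarrow> 'v) \<Rightarrow> 'v \<Rightarrow> 'f \<Rightarrow> real.\<close>

definition valid_instance ::
  "'v set \<Rightarrow> ('v \<times> 'v) set \<Rightarrow> ('v \<Rightarrow> real) \<Rightarrow> 'f set \<Rightarrow> ('f \<Rightarrow> 'v set) \<Rightarrow> nat \<Rightarrow> bool" where
  "valid_instance V E w F U k \<longleftrightarrow>
     finite V \<and> E \<subseteq> V \<times> V \<and> (\<forall>v\<in>V. w v \<in> \<rat> \<and> w v > 0) \<and>
     finite F \<and> card F = k \<and> (\<forall>f\<in>F. U f \<subseteq> V)"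

definition nbh :: "('v \<times> 'v) set \<Rightarrow> 'v \<Rightarrow> 'v set" where
  "nbh E v = insert v {u. (v, u) \<in> E}"

definition fpps :: "'f set \<Rightarrow> ('f \<Rightarrow> 'v set) \<Rightarrow> ('f \<Rightarrow> 'v) set" where
  "fpps F U = (\<Pi>\<^sub>E f\<in>F. U f)"

definition Ns :: "'f set \<Rightarrow> ('v \<times> 'v) set \<Rightarrow> ('f \<Rightarrow> 'v) \<Rightarrow> 'v \<Rightarrow> 'f set" where
  "Ns F E s v = {f \<in> F. s f \<in> nbh E v}"

definition feasible_dist ::
  "'f set \<Rightarrow> ('v \<times> 'v) set \<Rightarrow> ('f \<Rightarrow> 'v) \<Rightarrow> 'v \<Rightarrow> ('f \<Rightarrow> real) \<Rightarrow> bool" where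
  "feasible_dist F E s v d \<longleftrightarrow>
     (\<forall>f. 0 \<le> d f \<and> d f \<le> 1) \<and>
     (\<forall>f. f \<notin> Ns F E s v \<longrightarrow> d f = 0) \<and>
     (Ns F E s v \<noteq> {} \<longrightarrow> (\<Sum>f\<in>Ns F E s v. d f) = 1)"

definition client_profile ::
  "'v set \<Rightarrow> 'f set \<Rightarrow> ('v \<times> 'v) set \<Rightarrow> ('f \<Rightarrow> 'v) \<Rightarrow> ('v \<Rightarrow> 'f \<Rightarrow> real) \<Rightarrow> bool" where
  "client_profile V F E s p \<longleftrightarrow> (\<forall>v\<in>V. feasible_dist F E s v (p v))"

definition load :: "'v set \<Rightarrow> ('v \<Rightarrow> real) \<Rightarrow> ('v \<Rightarrow> 'f \<Rightarrow> real) \<Rightarrow> 'f \<Rightarrow> real" where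
  "load V w p f = (\<Sum>v\<in>V. p v f * w v)"

definition load_minus :: "'v set \<Rightarrow> ('v \<Rightarrow> real) \<Rightarrow> ('v \<Rightarrow> 'f \<Rightarrow> real) \<Rightarrow> 'v \<Rightarrow> 'f \<Rightarrow> real" where
  "load_minus V w p v f = (\<Sum>u\<in>V - {v}. p u f * w u)"

definition client_cost ::
  "'v set \<Rightarrow> 'f set \<Rightarrow> ('v \<times> 'v) set \<Rightarrow> ('v \<Rightarrow> real) \<Rightarrow> ('f \<Rightarrow> 'v) \<Rightarrow> ('v \<Rightarrow> 'f \<Rightarrow> real) \<Rightarrow> 'v \<Rightarrow> real" where
  "client_cost V F E w s p v = w v + (\<Sum>f\<in>Ns F E s v. p v f * load_minus V w p v f)"

definition client_eq ::
  "'v set \<Rightarrow> 'f set \<Rightarrow> ('v \<times> 'v) set \<Rightarrow> ('v \<Rightarrow> real) \<Rightarrow> ('f \<Rightarrow> 'v) \<Rightarrow> ('v \<Rightarrow> 'f \<Rightarrow> real) \<Rightarrow> bool" where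
  "client_eq V F E w s p \<longleftrightarrow> client_profile V F E s p \<and>
     (\<forall>v\<in>V. \<forall>d. feasible_dist F E s v d \<longrightarrow>
        client_cost V F E w s p v \<le> client_cost V F E w s (p(v := d)) v)"

definition full_client_eq ::
  "'v set \<Rightarrow> ('v \<times> 'v) set \<Rightarrow> ('v \<Rightarrow> real) \<Rightarrow> 'f set \<Rightarrow> ('f \<Rightarrow> 'v set) \<Rightarrow>
   (('f \<Rightarrow> 'v) \<Rightarrow> 'v \<Rightarrow> 'f \<Rightarrow> real) \<Rightarrow> bool" where
  "full_client_eq V E w F U \<sigma> \<longleftrightarrow> (\<forall>s'\<in>fpps F U. client_eq V F E w s' (\<sigma> s'))"

definition is_SPE ::
  "'v set \<Rightarrow> ('v \<times> 'v) set \<Rightarrow> ('v \<Rightarrow> real) \<Rightarrow> 'f set \<Rightarrow> ('f \<Rightarrow> 'v set) \<Rightarrow>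
   ('f \<Rightarrow> 'v) \<Rightarrow> (('f \<Rightarrow> 'v) \<Rightarrow> 'v \<Rightarrow> 'f \<Rightarrow> real) \<Rightarrow> bool" where
  "is_SPE V E w F U s \<sigma> \<longleftrightarrow> s \<in> fpps F U \<and> full_client_eq V E w F U \<sigma> \<and>
     \<not> (\<exists>f\<in>F. \<exists>x\<in>U f. load V w (\<sigma> (s(f := x))) f > load V w (\<sigma> s) f)"

definition participation ::
  "'v set \<Rightarrow> ('v \<times> 'v) set \<Rightarrow> ('v \<Rightarrow> real) \<Rightarrow> 'f set \<Rightarrow> ('f \<Rightarrow> 'v) \<Rightarrow> real" where
  "participation V E w F s = (\<Sum>v\<in>{v\<in>V. Ns F E s v \<noteq> {}}. w v)"

end

theory Submission
  imports Defs
begin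

text \<open>
  Upper bound: let \<open>s\<close> be an SPE and \<open>s*\<close> any placement. If facility \<open>f\<close> moved to its location
  in \<open>s*\<close>, every client seeing that location but no facility of \<open>s\<close> would have \<open>f\<close> as its
  only neighbouring facility and hence be served entirely by \<open>f\<close>; since the move is not
  profitable, these clients weigh at most the load of \<open>f\<close> in \<open>s\<close>. Summing over \<open>f\<close>, the clients
  served in \<open>s*\<close> but not in \<open>s\<close> weigh at most the total load in \<open>s\<close>, which is \<open>w(s)\<close>.

  Lower bound: a star whose centre has weight \<open>k\<close> and sees \<open>k\<close> leaves of weight 1, each leaf
  seeing only itself; facility \<open>f\<close> may sit at the centre or at its own leaf. With all facilities at
  the centre, each has load 1 and \<open>w(s) = k\<close>, while all facilities at the leaves give \<open>2 k\<close>.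
\<close>

lemma sum_Un_le:
  fixes g :: "'a \<Rightarrow> 'b::ordered_ab_group_add"
  assumes "finite A" and "finite B" and "\<And>x. x \<in> A \<union> B \<Longrightarrow> 0 \<le> g x"
  shows "sum g (A \<union> B) \<le> sum g A + sum g B"
proof -
  have "0 \<le> sum g (A \<inter> B)"
    using assms(3) by (intro sum_nonneg) auto
  then show ?thesis
    using assms(1,2) by (simp add: sum_Un)
qed

lemma sum_UN_le_sum:
  fixes g :: "'a \<Rightarrow> 'b::ordered_ab_group_add"
  assumes "finite I" and "\<And>i. i \<in> I \<Longrightarrow> finite (B i)"
    and "\<And>x. x \<in> (\<Union>i\<in>I. B i) \<Longrightarrow> 0 \<le> g x"
  shows "sum g (\<Union>i\<in>I. B i) \<le> (\<Sum>i\<in>I. sum g (B i))"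
  using assms
proof (induction I rule: finite_induct)
  case empty
  then show ?case by simp
next
  case (insert j I)
  let ?U = "\<Union>i\<in>I. B i"
  have "sum g (B j \<union> ?U) \<le> sum g (B j) + sum g ?U"
    using insert by (intro sum_Un_le) auto
  also have "sum g ?U \<le> (\<Sum>i\<in>I. sum g (B i))"
    using insert.prems by (intro insert.IH) auto
  finally show ?case
    using insert.hyps by (simp add: add_left_mono)
qed

lemma feasible_dist_sum:
  assumes "finite F" and "feasible_dist F E s v d"
  shows "(\<Sum>f\<in>F. d f) = (if Ns F E s v = {} then 0 else 1)"
proof -
  have "(\<Sum>f\<in>F. d f) = (\<Sum>f\<in>Ns F E s v. d f)"
    using assms by (intro sum.mono_neutral_right) (auto simp: Ns_def feasible_dist_def)
  then show ?thesis
    using assms(2) by (auto simp: feasible_dist_def)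
qed

lemma sum_load_eq_participation:
  assumes "finite V" and "finite F" and "client_profile V F E s p"
  shows "(\<Sum>f\<in>F. load V w p f) = participation V E w F s"
proof -
  have "(\<Sum>f\<in>F. load V w p f) = (\<Sum>v\<in>V. w v * (\<Sum>f\<in>F. p v f))"
    unfolding load_def by (subst sum.swap) (simp add: sum_distrib_left mult.commute)
  also have "\<dots> = (\<Sum>v\<in>V. if Ns F E s v \<noteq> {} then w v else 0)"
  proof (intro sum.cong refl)
    fix v assume "v \<in> V"
    then have "(\<Sum>f\<in>F. p v f) = (if Ns F E s v = {} then 0 else 1)"
      using assms(2,3) by (intro feasible_dist_sum) (auto simp: client_profile_def)
    then show "w v * (\<Sum>f\<in>F. p v f) = (if Ns F E s v \<noteq> {} then w v else 0)"
      by simp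
  qed
  also have "\<dots> = participation V E w F s"
    using assms(1) by (simp add: participation_def sum.inter_filter)
  finally show ?thesis .
qed

lemma sum_weight_le_load:
  assumes "finite V" and "\<And>v. v \<in> V \<Longrightarrow> 0 \<le> w v" and "client_profile V F E s p"
    and "D \<subseteq> V" and "\<And>v. v \<in> D \<Longrightarrow> Ns F E s v = {f}"
  shows "sum w D \<le> load V w p f"
proof -
  have "p v f = 1" if "v \<in> D" for v
  proof -
    have "feasible_dist F E s v (p v)"
      using assms(3,4) that by (auto simp: client_profile_def)
    then show ?thesis
      using assms(5)[OF that] by (simp add: feasible_dist_def)
  qed
  then have "sum w D = (\<Sum>v\<in>D. p v f * w v)"
    by simp
  also have "\<dots> \<le> (\<Sum>v\<in>V. p v f * w v)"
    using assms(1-4) by (intro sum_mono2) (auto simp: client_profile_def feasible_dist_def)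
  finally show ?thesis
    by (simp add: load_def)
qed

theorem participation_le_twice_SPE:
  assumes "valid_instance V E w F U k" and "is_SPE V E w F U s \<sigma>" and "s' \<in> fpps F U"
  shows "participation V E w F s' \<le> 2 * participation V E w F s"
proof -
  have fin: "finite V" "finite F" and w_nonneg: "\<And>v. v \<in> V \<Longrightarrow> 0 \<le> w v"
    using assms(1) by (auto simp: valid_instance_def less_imp_le)
  have s: "s \<in> fpps F U"
    and profile: "\<And>t. t \<in> fpps F U \<Longrightarrow> client_profile V F E t (\<sigma> t)"
    and no_deviation: "\<And>f x. f \<in> F \<Longrightarrow> x \<in> U f \<Longrightarrow> load V w (\<sigma> (s(f := x))) f \<le> load V w (\<sigma> s) f"
    using assms(2) by (auto simp: is_SPE_def full_client_eq_def client_eq_def not_less)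
  define covered where "covered t = {v \<in> V. Ns F E t v \<noteq> {}}" for t
  define gained where "gained f = {v \<in> V. s' f \<in> nbh E v \<and> Ns F E s v = {}}" for f
  have gained_le_load: "sum w (gained f) \<le> load V w (\<sigma> s) f" if "f \<in> F" for f
  proof -
    have "s(f := s' f) \<in> fpps F U"
      using s assms(3) that by (auto simp: fpps_def)
    then have "sum w (gained f) \<le> load V w (\<sigma> (s(f := s' f))) f"
      using fin(1) w_nonneg profile that
      by (intro sum_weight_le_load) (auto simp: gained_def Ns_def split: if_splits)
    also have "\<dots> \<le> load V w (\<sigma> s) f"
      using no_deviation that assms(3) by (auto simp: fpps_def)
    finally show ?thesis .
  qed
  have "covered s' \<subseteq> covered s \<union> (\<Union>f\<in>F. gained f)"
    by (auto simp: covered_def gained_def Ns_def)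
  then have "participation V E w F s' \<le> sum w (covered s \<union> (\<Union>f\<in>F. gained f))"
    unfolding participation_def covered_def[symmetric] using fin w_nonneg
    by (intro sum_mono2) (auto simp: covered_def gained_def)
  also have "\<dots> \<le> participation V E w F s + sum w (\<Union>f\<in>F. gained f)"
    unfolding participation_def covered_def[symmetric] using fin w_nonneg
    by (intro sum_Un_le) (auto simp: covered_def gained_def)
  also have "sum w (\<Union>f\<in>F. gained f) \<le> (\<Sum>f\<in>F. sum w (gained f))"
    using fin w_nonneg by (intro sum_UN_le_sum) (auto simp: gained_def)
  also have "\<dots> \<le> (\<Sum>f\<in>F. load V w (\<sigma> s) f)"
    by (intro sum_mono gained_le_load)
  also have "\<dots> = participation V E w F s"
    using fin profile[OF s] by (rule sum_load_eq_participation)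
  finally show ?thesis
    by simp
qed

lemma load_minus_fun_upd_self [simp]:
  "load_minus V w (p(v := d)) v = load_minus V w p v"
  unfolding load_minus_def by (intro ext sum.cong) auto

lemma load_eq_load_minus:
  assumes "finite V" and "v \<in> V"
  shows "load V w p f = p v f * w v + load_minus V w p v f"
  using assms by (simp add: load_def load_minus_def sum.remove)

text \<open>
  As \<open>load_minus\<close> ignores the client's own share, its cost is linear in its own distribution;
  hence a distribution supported on the facilities of least \<open>load_minus\<close> is a best response.
\<close>

lemma client_cost_le_if_supported_on_minimal:
  assumes "feasible_dist F E s v (p v)" and "feasible_dist F E s v d"
    and "\<And>f. f \<in> Ns F E s v \<Longrightarrow> m \<le> load_minus V w p v f"
    and "\<And>f. f \<in> Ns F E s v \<Longrightarrow> p v f \<noteq> 0 \<Longrightarrow> load_minus V w p v f = m"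
  shows "client_cost V F E w s p v \<le> client_cost V F E w s (p(v := d)) v"
proof -
  let ?N = "Ns F E s v" and ?l = "load_minus V w p v"
  have same_mass: "(\<Sum>f\<in>?N. p v f) = (\<Sum>f\<in>?N. d f)"
    using assms(1,2) by (cases "?N = {}") (auto simp: feasible_dist_def)
  have "(\<Sum>f\<in>?N. p v f * ?l f) = (\<Sum>f\<in>?N. p v f * m)"
    using assms(4) by (intro sum.cong) auto
  also have "\<dots> = (\<Sum>f\<in>?N. d f * m)"
    using same_mass by (simp add: sum_distrib_right[symmetric])
  also have "\<dots> \<le> (\<Sum>f\<in>?N. d f * ?l f)"
    using assms(2,3) by (intro sum_mono mult_left_mono) (auto simp: feasible_dist_def)
  finally show ?thesis
    by (simp add: client_cost_def)
qed

lemma client_eq_if_supported_on_minimal: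
  assumes "client_profile V F E s p"
    and "\<And>v. v \<in> V \<Longrightarrow> \<exists>m. (\<forall>f\<in>Ns F E s v. m \<le> load_minus V w p v f) \<and>
                              (\<forall>f\<in>Ns F E s v. p v f \<noteq> 0 \<longrightarrow> load_minus V w p v f = m)"
  shows "client_eq V F E w s p"
  unfolding client_eq_def
proof (intro conjI assms(1) ballI allI impI)
  fix v d
  assume "v \<in> V" and "feasible_dist F E s v d"
  with assms show "client_cost V F E w s p v \<le> client_cost V F E w s (p(v := d)) v"
    by (metis client_profile_def client_cost_le_if_supported_on_minimal)
qed

definition uniform_dist :: "'a set \<Rightarrow> 'a \<Rightarrow> real" where
  "uniform_dist A x = (if x \<in> A then 1 / real (card A) else 0)"

lemma feasible_dist_uniform_dist:
  assumes "finite F" and "A \<noteq> {}" and "A \<subseteq> Ns F E s v"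
  shows "feasible_dist F E s v (uniform_dist A)"
proof -
  have fin: "finite (Ns F E s v)" "finite A"
    using assms(1,3) by (auto simp: Ns_def intro: finite_subset)
  then have "(\<Sum>f\<in>Ns F E s v. uniform_dist A f) = (\<Sum>f\<in>A. 1 / real (card A))"
    using assms(3) by (simp add: uniform_dist_def sum.If_cases Int_absorb1)
  also have "\<dots> = 1"
    using fin(2) assms(2) by simp
  finally have "(\<Sum>f\<in>Ns F E s v. uniform_dist A f) = 1" .
  moreover have "1 \<le> card A"
    using fin(2) assms(2) by (simp add: Suc_le_eq card_gt_0_iff)
  ultimately show ?thesis
    using assms(3) by (auto simp: feasible_dist_def uniform_dist_def)
qed

text \<open>
  The centre client spreads uniformly over the facilities at the centre, which have no other
  clients, and over all facilities if none is there. A facility leaving the centre for its leaf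
  thus gains the leaf but loses its share of the centre, as long as another facility (\<open>k \<ge> 2\<close>)
  stays behind.
\<close>

definition star_vertices :: "nat \<Rightarrow> nat set" where
  "star_vertices k = {0..k}"

definition star_edges :: "nat \<Rightarrow> (nat \<times> nat) set" where
  "star_edges k = {(0, Suc f) | f. f < k}"

definition star_weight :: "nat \<Rightarrow> nat \<Rightarrow> real" where
  "star_weight k v = (if v = 0 then real k else 1)"

definition star_locations :: "nat \<Rightarrow> nat set" where
  "star_locations f = {0, Suc f}"

definition centre_facilities :: "nat \<Rightarrow> (nat \<Rightarrow> nat) \<Rightarrow> nat set" where
  "centre_facilities k t = {f \<in> {..<k}. t f = 0}"

definition star_profile :: "nat \<Rightarrow> (nat \<Rightarrow> nat) \<Rightarrow> nat \<Rightarrow> nat \<Rightarrow> real" where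
  "star_profile k t v =
     (if v = 0 then uniform_dist (if centre_facilities k t = {} then {..<k} else centre_facilities k t)
      else (\<lambda>f. if f < k \<and> v = Suc f \<and> t f = v then 1 else 0))"

definition all_at_centre :: "nat \<Rightarrow> nat \<Rightarrow> nat" where
  "all_at_centre k = (\<lambda>f\<in>{..<k}. 0)"

definition all_at_leaves :: "nat \<Rightarrow> nat \<Rightarrow> nat" where
  "all_at_leaves k = (\<lambda>f\<in>{..<k}. Suc f)"

lemma star_location_cases:
  assumes "t \<in> fpps {..<k} star_locations" and "f < k"
  obtains "t f = 0" | "t f = Suc f"
proof -
  have "t f \<in> star_locations f"
    using assms by (simp add: fpps_def PiE_iff)
  then show ?thesis
    using that by (auto simp: star_locations_def)
qed

lemma Ns_star_centre:
  assumes "t \<in> fpps {..<k} star_locations"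
  shows "Ns {..<k} (star_edges k) t 0 = {..<k}"
proof -
  have "t f \<in> nbh (star_edges k) 0" if "f < k" for f
    using star_location_cases[OF assms that] that by cases (auto simp: nbh_def star_edges_def)
  then show ?thesis
    by (auto simp: Ns_def)
qed

lemma Ns_star_leaf:
  assumes "t \<in> fpps {..<k} star_locations"
  shows "Ns {..<k} (star_edges k) t (Suc j) = (if j < k \<and> t j = Suc j then {j} else {})"
proof -
  have "nbh (star_edges k) (Suc j) = {Suc j}"
    by (auto simp: nbh_def star_edges_def)
  then have "Ns {..<k} (star_edges k) t (Suc j) = {f \<in> {..<k}. t f = Suc j}"
    by (simp add: Ns_def)
  also have "\<dots> = {f \<in> {..<k}. f = j \<and> t j = Suc j}"
  proof (rule Collect_cong)
    fix f
    show "f \<in> {..<k} \<and> t f = Suc j \<longleftrightarrow> f \<in> {..<k} \<and> f = j \<and> t j = Suc j"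
      by (cases "f < k") (auto elim: star_location_cases[OF assms])
  qed
  finally show ?thesis
    by auto
qed

lemma star_client_profile:
  assumes "t \<in> fpps {..<k} star_locations" and "0 < k"
  shows "client_profile (star_vertices k) {..<k} (star_edges k) t (star_profile k t)"
  unfolding client_profile_def
proof
  fix v
  show "feasible_dist {..<k} (star_edges k) t v (star_profile k t v)"
  proof (cases v)
    case 0
    then show ?thesis
      using assms by (auto simp: star_profile_def Ns_star_centre centre_facilities_def
          intro!: feasible_dist_uniform_dist)
  next
    case (Suc j)
    then show ?thesis
      using assms(1) by (auto simp: feasible_dist_def star_profile_def Ns_star_leaf)
  qed
qed

lemma load_minus_star_centre:
  assumes "f < k"
  shows "load_minus (star_vertices k) (star_weight k) (star_profile k t) 0 f
           = (if t f = Suc f then 1 else 0)"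
proof -
  have "load_minus (star_vertices k) (star_weight k) (star_profile k t) 0 f
          = (\<Sum>u\<in>{0..k} - {0}. if u = Suc f then (if t f = Suc f then 1 else 0) else 0)"
    unfolding load_minus_def star_vertices_def
    by (intro sum.cong) (auto simp: star_profile_def star_weight_def)
  also have "\<dots> = (if t f = Suc f then 1 else 0)"
    using assms by (subst sum.delta) auto
  finally show ?thesis .
qed

lemma load_star:
  assumes "f < k"
  shows "load (star_vertices k) (star_weight k) (star_profile k t) f
           = star_profile k t 0 f * real k + (if t f = Suc f then 1 else 0)"
proof -
  have "load (star_vertices k) (star_weight k) (star_profile k t) f
          = star_profile k t 0 f * star_weight k 0
            + load_minus (star_vertices k) (star_weight k) (star_profile k t) 0 f"
    by (rule load_eq_load_minus) (auto simp: star_vertices_def)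
  then show ?thesis
    using assms by (simp add: star_weight_def load_minus_star_centre)
qed

lemma star_full_client_eq:
  assumes "0 < k"
  shows "full_client_eq (star_vertices k) (star_edges k) (star_weight k) {..<k} star_locations
           (star_profile k)"
  unfolding full_client_eq_def
proof
  fix t
  assume t: "t \<in> fpps {..<k} star_locations"
  let ?l = "load_minus (star_vertices k) (star_weight k) (star_profile k t)"
  show "client_eq (star_vertices k) {..<k} (star_edges k) (star_weight k) t (star_profile k t)"
  proof (rule client_eq_if_supported_on_minimal)
    show "client_profile (star_vertices k) {..<k} (star_edges k) t (star_profile k t)"
      using t assms by (rule star_client_profile)
  next
    fix v
    show "\<exists>m. (\<forall>f\<in>Ns {..<k} (star_edges k) t v. m \<le> ?l v f) \<and>
              (\<forall>f\<in>Ns {..<k} (star_edges k) t v. star_profile k t v f \<noteq> 0 \<longrightarrow> ?l v f = m)"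
    proof (cases v)
      case 0
      define m where "m = (if centre_facilities k t = {} then 1 else 0 :: real)"
      have "m \<le> ?l 0 f \<and> (star_profile k t 0 f \<noteq> 0 \<longrightarrow> ?l 0 f = m)" if "f < k" for f
        using star_location_cases[OF t that]
      proof cases
        case 1
        then have "centre_facilities k t \<noteq> {}"
          using that by (auto simp: centre_facilities_def)
        then show ?thesis
          using 1 that by (simp add: m_def load_minus_star_centre)
      next
        case 2
        then have "f \<notin> centre_facilities k t"
          by (simp add: centre_facilities_def)
        then show ?thesis
          using 2 that by (auto simp: m_def load_minus_star_centre star_profile_def uniform_dist_def)
      qed
      then show ?thesis
        using 0 t by (auto simp: Ns_star_centre)
    next
      case (Suc j)
      then show ?thesis
        using t by (intro exI[of _ "?l v j"]) (auto simp: Ns_star_leaf)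
    qed
  qed
qed

lemma all_at_centre_fpp: "all_at_centre k \<in> fpps {..<k} star_locations"
  by (simp add: fpps_def all_at_centre_def star_locations_def)

lemma all_at_leaves_fpp: "all_at_leaves k \<in> fpps {..<k} star_locations"
  by (simp add: fpps_def all_at_leaves_def star_locations_def)

lemma load_all_at_centre:
  assumes "f < k"
  shows "load (star_vertices k) (star_weight k) (star_profile k (all_at_centre k)) f = 1"
proof -
  have "centre_facilities k (all_at_centre k) = {..<k}"
    by (auto simp: centre_facilities_def all_at_centre_def)
  moreover have "{..<k} \<noteq> {}"
    using assms by auto
  ultimately show ?thesis
    using assms by (simp add: load_star star_profile_def uniform_dist_def all_at_centre_def)
qed

lemma load_move_to_leaf:
  assumes "f < k" and "2 \<le> k"
  shows "load (star_vertices k) (star_weight k) (star_profile k ((all_at_centre k)(f := Suc f))) f = 1"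
proof -
  let ?t = "(all_at_centre k)(f := Suc f)"
  have "(if f = 0 then 1 else 0) \<in> centre_facilities k ?t"
    using assms by (auto simp: centre_facilities_def all_at_centre_def)
  moreover have "f \<notin> centre_facilities k ?t"
    by (simp add: centre_facilities_def)
  ultimately have "star_profile k ?t 0 f = 0"
    by (auto simp: star_profile_def uniform_dist_def)
  then show ?thesis
    using assms(1) by (simp add: load_star)
qed

lemma star_is_SPE:
  assumes "2 \<le> k"
  shows "is_SPE (star_vertices k) (star_edges k) (star_weight k) {..<k} star_locations
           (all_at_centre k) (star_profile k)"
proof -
  have "load (star_vertices k) (star_weight k) (star_profile k ((all_at_centre k)(f := x))) f
          \<le> load (star_vertices k) (star_weight k) (star_profile k (all_at_centre k)) f"
    if "f < k" and "x \<in> star_locations f" for f x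
  proof -
    have "x = 0 \<or> x = Suc f"
      using that(2) by (simp add: star_locations_def)
    moreover have "(all_at_centre k)(f := 0) = all_at_centre k"
      using that(1) by (auto simp: all_at_centre_def)
    ultimately show ?thesis
      using that(1) assms load_move_to_leaf load_all_at_centre by auto
  qed
  then show ?thesis
    using assms all_at_centre_fpp star_full_client_eq by (auto simp: is_SPE_def not_less)
qed

lemma participation_all_at_centre:
  assumes "0 < k"
  shows "participation (star_vertices k) (star_edges k) (star_weight k) {..<k} (all_at_centre k)
           = real k"
proof -
  have "participation (star_vertices k) (star_edges k) (star_weight k) {..<k} (all_at_centre k)
          = (\<Sum>f<k. load (star_vertices k) (star_weight k) (star_profile k (all_at_centre k)) f)"
    using assms all_at_centre_fpp
    by (intro sum_load_eq_participation[symmetric] star_client_profile) (auto simp: star_vertices_def)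
  then show ?thesis
    by (simp add: load_all_at_centre)
qed

lemma participation_all_at_leaves:
  assumes "0 < k"
  shows "participation (star_vertices k) (star_edges k) (star_weight k) {..<k} (all_at_leaves k)
           = 2 * real k"
proof -
  have "participation (star_vertices k) (star_edges k) (star_weight k) {..<k} (all_at_leaves k)
          = (\<Sum>f<k. load (star_vertices k) (star_weight k) (star_profile k (all_at_leaves k)) f)"
    using assms all_at_leaves_fpp
    by (intro sum_load_eq_participation[symmetric] star_client_profile) (auto simp: star_vertices_def)
  moreover have "centre_facilities k (all_at_leaves k) = {}"
    by (auto simp: centre_facilities_def all_at_leaves_def)
  ultimately show ?thesis
    using assms by (simp add: load_star star_profile_def uniform_dist_def all_at_leaves_def)
qed

lemma star_valid_instance:
  assumes "0 < k"
  shows "valid_instance (star_vertices k) (star_edges k) (star_weight k) {..<k} star_locations k"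
  using assms by (auto simp: valid_instance_def star_vertices_def star_edges_def star_weight_def
      star_locations_def)

theorem mainTheorem5:
  fixes k :: nat
  assumes "k \<ge> 2"
  shows "(\<forall>(V :: 'v set) E w (F :: 'f set) U s \<sigma> s'.
            valid_instance V E w F U k \<and> is_SPE V E w F U s \<sigma> \<and> s' \<in> fpps F U \<longrightarrow>
              participation V E w F s' \<le> 2 * participation V E w F s)
       \<and> (\<exists>(V :: nat set) E w (F :: nat set) U s \<sigma> s'.
            valid_instance V E w F U k \<and> is_SPE V E w F U s \<sigma> \<and> s' \<in> fpps F U \<and>
              participation V E w F s' = 2 * participation V E w F s \<and>
              participation V E w F s > 0)"
proof -
  have k: "0 < k"
    using assms by simp
  have "participation (star_vertices k) (star_edges k) (star_weight k) {..<k} (all_at_leaves k)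
          = 2 * participation (star_vertices k) (star_edges k) (star_weight k) {..<k} (all_at_centre k)"
    and "participation (star_vertices k) (star_edges k) (star_weight k) {..<k} (all_at_centre k) > 0"
    using participation_all_at_centre[OF k] participation_all_at_leaves[OF k] k by simp_all
  with star_valid_instance[OF k] star_is_SPE[OF assms] all_at_leaves_fpp
  show ?thesis
    using participation_le_twice_SPE by blast
qed

end
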